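(* Let $k\ge0$ and $N\ge0$ be integers and $a,b,c,d,e,f\in\mathbb{C}$ generic. For a polynomial $Q$ with $Q(N)\ne0$, put $R(n)=Q(N-n)/Q(N)$ and $$L_Q=\sum_{n=0}^N\frac{(a)_n(1+\tfrac a2)_n(b)_n(c)_n(d)_n(e)_n(-N)_n}{n!\,(\tfrac a2)_n(1+a-b)_n(1+a-c)_n(1+a-d)_n(1+a-e)_n(1+a+N)_n}\,R(n).$$ (i) If $Q(n)=Q_k^{(2)}(n;-a-2N;d-a-N,e-a-N)$, then $$L_Q=\frac{1}{Q(N)}\,\frac{(1+a)_N(1-k+a-d-e)_N}{(1+a-d)_N(1+a-e)_N}\;{}_4F_3\!\left[\begin{matrix}1+a-b-c,\ d,\ e,\ -N\\ 1+a-b,\ 1+a-c,\ k-a+d+e-N\end{matrix}\,\Big|\,1\right].$$ (ii) If $Q(n)=Q_k^{(2)}(n;-a-2N;d-a-N,e-a-N,f-a-N)$, then $$L_Q=\frac{1}{Q(N)}\,\frac{(1+a)_N(1-k+a-d-e)_N(1-k+a-f)_N}{(1+a-d)_N(1+a-e)_N(1+a-f)_N}\;{}_5F_4\!\left[\begin{matrix}1+a-b-c,\ d,\ e,\ 1+a-f,\ -N\\ 1+a-b,\ 1+a-c,\ k-a+d+e-N,\ 1-k+a-f\end{matrix}\,\Big|\,1\right].$$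
   Context: $(c)_n$ denotes the Pochhammer symbol, $(c)_0=1$; ${}_pF_q(1)$ denotes the (terminating) generalized hypergeometric series at argument $1$. The polynomials are $Q_k^{(2)}(n;\alpha;\beta,\gamma)=\sum_{j=0}^k\frac{(-n)_j(n+\alpha)_j(-k)_j}{j!(\beta)_j(\gamma)_j}$ and $Q_k^{(2)}(n;\alpha;\beta,\gamma,\delta)=\sum_{j=0}^k\frac{(-n)_j(n+\alpha)_j(-k)_j(k-1-\alpha+\beta+\gamma+\delta)_j}{j!(\beta)_j(\gamma)_j(\delta)_j}$. Parameters are generic so that no lower parameter is a nonpositive integer (among the first $N$ Pochhammer factors) and no denominator vanishes. *)

theory Defs
  imports Complex_Main
begin

text \<open>With an upper parameter -N and M = N this is the full terminating series.\<close>
definition hypF :: "complex list \<Rightarrow> complex list \<Rightarrow> nat \<Rightarrow> complex" where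
  "hypF ups lows M = (\<Sum>j=0..M. prod_list (map (\<lambda>u. pochhammer u j) ups) /
       (fact j * prod_list (map (\<lambda>l. pochhammer l j) lows)))"

definition Q2_2 :: "nat \<Rightarrow> complex \<Rightarrow> complex \<Rightarrow> complex \<Rightarrow> complex \<Rightarrow> complex" where
  "Q2_2 k n \<alpha> \<beta> \<gamma> = (\<Sum>j=0..k. pochhammer (-n) j * pochhammer (n + \<alpha>) j * pochhammer (- of_nat k) j /
       (fact j * pochhammer \<beta> j * pochhammer \<gamma> j))"

definition Q2_3 :: "nat \<Rightarrow> complex \<Rightarrow> complex \<Rightarrow> complex \<Rightarrow> complex \<Rightarrow> complex \<Rightarrow> complex" where
  "Q2_3 k n \<alpha> \<beta> \<gamma> \<delta> = (\<Sum>j=0..k. pochhammer (-n) j * pochhammer (n + \<alpha>) j * pochhammer (- of_nat k) j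
       * pochhammer (of_nat k - 1 - \<alpha> + \<beta> + \<gamma> + \<delta>) j /
       (fact j * pochhammer \<beta> j * pochhammer \<gamma> j * pochhammer \<delta> j))"

definition LQ :: "complex \<Rightarrow> complex \<Rightarrow> complex \<Rightarrow> complex \<Rightarrow> complex \<Rightarrow> nat \<Rightarrow> (complex \<Rightarrow> complex) \<Rightarrow> complex" where
  "LQ a b c d e N Q = (\<Sum>n=0..N.
     pochhammer a n * pochhammer (1 + a/2) n * pochhammer b n * pochhammer c n * pochhammer d n
       * pochhammer e n * pochhammer (- of_nat N) n /
     (fact n * pochhammer (a/2) n * pochhammer (1 + a - b) n * pochhammer (1 + a - c) n
       * pochhammer (1 + a - d) n * pochhammer (1 + a - e) n * pochhammer (1 + a + of_nat N) n)
     * (Q (of_nat N - of_nat n) / Q (of_nat N)))"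

end

theory Submission
  imports Defs
begin

text \<open>
  Write the summand of L_Q as w(n) r_bc(n) r_de(n) Q(N-n)/Q(N), where
  w(n) = (a)_n (1+a/2)_n (-N)_n / (n! (a/2)_n (1+a+N)_n) is the very-well-poised weight and
  r_xy(n) = (x)_n (y)_n / ((1+a-x)_n (1+a-y)_n).

  By the Pfaff-Saalschuetz sum, r_bc(n) = sum_i (-n)_i (a+n)_i eps_i with
  eps_i = (1+a-b-c)_i / (i! (1+a-b)_i (1+a-c)_i). Multiplying w(n) by (-n)_i (a+n)_i and putting
  n = i + m turns w, up to a factor depending on i, into the weight with (a, N) replaced by
  (a+2i, N-i); r_de splits in the same way, and Q(N-n) does not change, because its parameters
  -a-2N, d-a-N, e-a-N, f-a-N are invariant under this shift. Hence L_Q is a combination of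
  single sums sum_n w(n) r_de(n) Q(N-n) at shifted parameters.

  The single sums rest on the biorthogonality
  sum_n w(n) (-n)_i (a+n)_i (n-N)_j (-a-N-n)_j = [i+j=N] N! (1+a)_N,
  which the same shift reduces to its case i = 0, a telescoping sum. Since Q(N-n) is a
  combination of the (n-N)_j (-a-N-n)_j, expanding r_de once more leaves a terminating sum:
  Chu-Vandermonde for Q_k^(2)(n; alpha; beta, gamma) and Pfaff-Saalschuetz for
  Q_k^(2)(n; alpha; beta, gamma, delta).
\<close>

section \<open>Pochhammer symbols\<close>

lemma pochhammer_reflect:
  "pochhammer (1 - z - of_nat n) n = (- 1) ^ n * (pochhammer z n :: 'a::comm_ring_1)"
  using pochhammer_minus'[of "- z" n] by (simp add: algebra_simps)

lemma pochhammer_split_reflected: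
  fixes z :: "'a::comm_ring_1"
  assumes "j \<le> N"
  shows "pochhammer z N = (- 1) ^ j * pochhammer z (N - j) * pochhammer (1 - z - of_nat N) j"
proof -
  have split: "pochhammer z N = pochhammer z (N - j) * pochhammer (z + of_nat (N - j)) j"
    using pochhammer_product'[of z "N - j" j] assms by simp
  have "1 - (1 - z - of_nat N) - of_nat j = z + of_nat (N - j)"
    using assms by (simp add: of_nat_diff)
  then have "pochhammer (z + of_nat (N - j)) j = (- 1) ^ j * pochhammer (1 - z - of_nat N) j"
    using pochhammer_reflect[of "1 - z - of_nat N" j] by metis
  then show ?thesis
    unfolding split by (simp add: mult_ac)
qed

lemma pochhammer_of_nat_diff_eq_0:
  assumes "n \<le> N" "N < j"
  shows "pochhammer (of_nat n - of_nat N :: 'a::idom) j = 0"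
proof -
  have "of_nat n - of_nat N = - (of_nat (N - n) :: 'a)"
    using assms by (simp add: of_nat_diff)
  also have "pochhammer \<dots> j = 0"
    using assms by (intro pochhammer_of_nat_eq_0_lemma) simp
  finally show ?thesis .
qed

lemma pochhammer_neg_of_nat:
  "pochhammer (- of_nat N :: 'a::field_char_0) n = (- 1) ^ n * of_nat (N choose n) * fact n"
proof -
  have "of_nat (N choose n) * fact n = (- 1) ^ n * (pochhammer (- of_nat N) n :: 'a)"
    using gbinomial_pochhammer[of "of_nat N :: 'a" n] by (simp add: binomial_gbinomial field_simps)
  then show ?thesis
    by (simp add: mult.assoc)
qed

lemma fact_add_pochhammer:
  "fact (m + i) = (fact m :: 'a::{semiring_char_0,comm_semiring_1}) * pochhammer (of_nat m + 1) i"
  using pochhammer_product'[of 1 m i] by (simp add: pochhammer_fact add.commute)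

lemma pochhammer_neg_of_nat_mult_fact:
  assumes "i \<le> N"
  shows "(- 1) ^ i * pochhammer (- of_nat N) i * fact (N - i) = (fact N :: 'a::field_char_0)"
proof -
  have "1 - (- of_nat N) - of_nat i = (of_nat (N - i) + 1 :: 'a)"
    using assms by (simp add: of_nat_diff)
  then have "pochhammer (of_nat (N - i) + 1) i = (- 1) ^ i * (pochhammer (- of_nat N) i :: 'a)"
    using pochhammer_reflect[of "- of_nat N :: 'a" i] by metis
  moreover have "fact N = fact (N - i) * (pochhammer (of_nat (N - i) + 1) i :: 'a)"
    using fact_add_pochhammer[of "N - i" i] assms by (simp del: of_nat_diff)
  ultimately show ?thesis
    by (simp add: mult_ac)
qed

lemma pochhammer_shift_one: "z * pochhammer (z + 1) n = pochhammer z n * (z + of_nat n)"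
  by (metis pochhammer_Suc pochhammer_rec)

lemma pochhammer_shift_neq_0:
  "pochhammer z N \<noteq> 0 \<Longrightarrow> i \<le> N \<Longrightarrow> pochhammer (z + of_nat i) (N - i) \<noteq> (0::'a::comm_semiring_1)"
  using pochhammer_product[of i N z] by auto

lemma pochhammer_tail_ratio:
  fixes z w :: "'a::field"
  assumes "pochhammer z N \<noteq> 0" "pochhammer w N \<noteq> 0" "i \<le> N"
  shows "pochhammer (z + of_nat i) (N - i) / pochhammer (w + of_nat i) (N - i)
    = pochhammer z N / pochhammer w N * (pochhammer w i / pochhammer z i)"
proof -
  have split_z: "pochhammer z N = pochhammer z i * pochhammer (z + of_nat i) (N - i)"
    and split_w: "pochhammer w N = pochhammer w i * pochhammer (w + of_nat i) (N - i)"
    using pochhammer_product[OF assms(3)] by blast+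
  have "pochhammer z i \<noteq> 0" "pochhammer w i \<noteq> 0" "pochhammer (w + of_nat i) (N - i) \<noteq> 0"
    using assms(1,2) unfolding split_z split_w by auto
  then show ?thesis
    unfolding split_z split_w by (simp add: field_simps)
qed

lemma neq_0_if_pochhammer_half_neq_0:
  "pochhammer (a / 2) N \<noteq> (0::'a::field_char_0) \<Longrightarrow> 0 < N \<Longrightarrow> a \<noteq> 0"
  by (auto simp: pochhammer_eq_0_iff)

lemma pochhammer_half_ratio:
  fixes a :: "'a::field_char_0"
  assumes "a \<noteq> 0" "pochhammer (a / 2) n \<noteq> 0"
  shows "pochhammer (1 + a / 2) n / pochhammer (a / 2) n = (a + 2 * of_nat n) / a"
proof -
  have "a / 2 * pochhammer (a / 2 + 1) n = pochhammer (a / 2) n * (a / 2 + of_nat n)"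
    by (rule pochhammer_shift_one)
  then show ?thesis
    using assms by (simp add: field_simps add.commute)
qed

lemma sum_truncate_if_le:
  fixes f :: "nat \<Rightarrow> 'a::comm_monoid_add"
  assumes "\<And>j. k < j \<Longrightarrow> f j = 0"
  shows "(\<Sum>j=0..k. if j \<le> N then f j else 0) = (\<Sum>j=0..N. f j)"
proof -
  have "(\<Sum>j=0..k. if j \<le> N then f j else 0) = (\<Sum>j\<in>{j\<in>{0..k}. j \<le> N}. f j)"
    by (rule sym, rule sum.inter_filter) simp
  also have "{j\<in>{0..k}. j \<le> N} = {0..min k N}"
    by auto
  also have "(\<Sum>j\<in>{0..min k N}. f j) = (\<Sum>j=0..N. f j)"
    using assms by (intro sum.mono_neutral_left) auto
  finally show ?thesis .
qed

section \<open>The Pfaff-Saalschuetz sum\<close>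

lemma binomial_Suc_absorb:
  "of_nat (Suc k) * (of_nat (Suc k + m choose Suc k) :: 'a::comm_semiring_1)
     = (of_nat m + 1) * of_nat (Suc k + m choose k)"
proof -
  have "Suc k * (Suc k + m choose Suc k) = Suc m * (Suc k + m choose k)"
    using binomial_absorption[of k "Suc k + m"] binomial_absorb_comp[of "Suc k + m" k] by simp
  then show ?thesis
    by (metis of_nat_Suc of_nat_mult add.commute)
qed

text \<open>WZ certificate: the summand for \<open>n + 1\<close> minus \<open>(C - A) (C - B)\<close> times the summand
  for \<open>n\<close> (with \<open>C + 1\<close> in place of \<open>C\<close>) is its forward difference in \<open>k\<close>.\<close>

definition saalschuetz_certificate :: "'a::comm_ring_1 \<Rightarrow> 'a \<Rightarrow> 'a \<Rightarrow> nat \<Rightarrow> nat \<Rightarrow> 'a" where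
  "saalschuetz_certificate A B C n k = (if k = 0 then 0 else - of_nat (n choose (k - 1))
     * pochhammer A k * pochhammer B k * pochhammer (C + of_nat k) (Suc n - k) * pochhammer (C + 1 - A - B) (Suc n - k))"

lemma saalschuetz_certificate_diff:
  fixes A B C :: "'a::comm_ring_1"
  assumes "k \<le> Suc n"
  shows "of_nat (Suc n choose k) * pochhammer A k * pochhammer B k
           * pochhammer (C + of_nat k) (Suc n - k) * pochhammer (C - A - B) (Suc n - k)
         - (C - A) * (C - B) * (of_nat (n choose k) * pochhammer A k * pochhammer B k
           * pochhammer (C + 1 + of_nat k) (n - k) * pochhammer (C + 1 - A - B) (n - k))
         = saalschuetz_certificate A B C n (Suc k) - saalschuetz_certificate A B C n k"
    (is "?t1 - (C - A) * (C - B) * ?t0 = ?g1 - ?g0")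
proof -
  have "k = 0 \<or> k = Suc n \<or> (\<exists>k' m. k = Suc k' \<and> n = Suc k' + m)"
  proof (cases k)
    case (Suc k')
    with assms have "k' < n \<or> k' = n"
      by auto
    with Suc show ?thesis
      by (auto dest: less_imp_Suc_add)
  qed simp
  then consider "k = 0" | "k = Suc n" | k' m where "k = Suc k'" "n = Suc k' + m"
    by blast
  then show ?thesis
  proof cases
    case 1
    have "pochhammer (C - A - B) (Suc n) = (C - A - B) * pochhammer (C + 1 - A - B) n"
      by (simp add: pochhammer_rec diff_add_eq)
    then show ?thesis
      using 1 by (simp add: saalschuetz_certificate_def pochhammer_rec[of C]) (simp add: algebra_simps)
  next
    case 2
    then show ?thesis
      by (simp add: saalschuetz_certificate_def binomial_eq_0)
  next
    case 3
    define X where "X = pochhammer A k * pochhammer B k * pochhammer (C + of_nat k + 1) m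
        * pochhammer (C + 1 - A - B) m"
    have t1: "?t1 = of_nat (Suc n choose k) * (C + of_nat k) * (C - A - B) * X"
      using 3 by (simp add: X_def pochhammer_rec algebra_simps)
    have t0: "?t0 = of_nat (n choose k) * X"
      using 3 by (simp add: X_def algebra_simps)
    have g1: "?g1 = - of_nat (n choose k) * (A + of_nat k) * (B + of_nat k) * X"
      using 3 by (simp add: saalschuetz_certificate_def X_def pochhammer_Suc algebra_simps)
    have "?g0 = - of_nat (n choose k') * pochhammer A k * pochhammer B k
        * pochhammer (C + of_nat k) (Suc m) * pochhammer (C + 1 - A - B) (Suc m)"
      using 3 by (simp add: saalschuetz_certificate_def)
    also have "\<dots> = - of_nat (n choose k') * (C + of_nat k) * (C + 1 - A - B + of_nat m) * X"
      unfolding pochhammer_rec[of "C + of_nat k"] pochhammer_Suc[of "C + 1 - A - B"] X_def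
      by (simp add: algebra_simps)
    finally have g0: "?g0 = - of_nat (n choose k') * (C + of_nat k) * (C + 1 - A - B + of_nat m) * X" .
    have pascal: "of_nat (Suc n choose k) = (of_nat (n choose k) + of_nat (n choose k') :: 'a)"
      using 3 by simp
    have absorb: "of_nat k * of_nat (n choose k) = (of_nat m + 1) * (of_nat (n choose k') :: 'a)"
      using binomial_Suc_absorb[of k' m] 3 by simp
    show ?thesis
      unfolding t1 t0 g1 g0 unfolding pascal using absorb by (simp add: algebra_simps)
  qed
qed

lemma pfaff_saalschuetz:
  fixes A B C :: "'a::comm_ring_1"
  shows "(\<Sum>k=0..n. of_nat (n choose k) * pochhammer A k * pochhammer B k
            * pochhammer (C + of_nat k) (n - k) * pochhammer (C - A - B) (n - k))
         = pochhammer (C - A) n * pochhammer (C - B) n"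
proof (induction n arbitrary: C)
  case 0
  then show ?case
    by simp
next
  case (Suc n)
  let ?t = "\<lambda>n C k. of_nat (n choose k) * pochhammer A k * pochhammer B k
      * pochhammer (C + of_nat k) (n - k) * pochhammer (C - A - B) (n - k)"
  have "(\<Sum>k=0..Suc n. ?t (Suc n) C k) - (C - A) * (C - B) * (\<Sum>k=0..Suc n. ?t n (C + 1) k)
      = (\<Sum>k=0..Suc n. saalschuetz_certificate A B C n (Suc k) - saalschuetz_certificate A B C n k)"
    unfolding sum_distrib_left sum_subtractf[symmetric]
    by (intro sum.cong refl) (simp add: saalschuetz_certificate_diff)
  also have "\<dots> = 0"
    by (subst sum_Suc_diff) (simp_all add: saalschuetz_certificate_def binomial_eq_0)
  finally have "(\<Sum>k=0..Suc n. ?t (Suc n) C k) = (C - A) * (C - B) * (\<Sum>k=0..Suc n. ?t n (C + 1) k)"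
    by simp
  also have "(\<Sum>k=0..Suc n. ?t n (C + 1) k) = (\<Sum>k=0..n. ?t n (C + 1) k)"
    by (simp add: binomial_eq_0)
  also have "\<dots> = pochhammer (C + 1 - A) n * pochhammer (C + 1 - B) n"
    using Suc.IH[of "C + 1"] by (simp add: algebra_simps)
  also have "(C - A) * (C - B) * \<dots> = pochhammer (C - A) (Suc n) * pochhammer (C - B) (Suc n)"
    by (simp add: pochhammer_rec algebra_simps)
  finally show ?case .
qed

lemma pfaff_saalschuetz_reflected:
  fixes A B u :: "'a::comm_ring_1"
  shows "(\<Sum>j=0..N. of_nat (N choose j) * pochhammer A j * pochhammer B j
            * ((- 1) ^ j * pochhammer u (N - j)) * pochhammer (1 - u - of_nat N - A - B) (N - j))
         = pochhammer (u + A) N * pochhammer (1 - u - B - of_nat N) N"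
proof -
  have reflect: "(- 1) ^ j * pochhammer u (N - j) = (- 1) ^ N * pochhammer (1 - u - of_nat N + of_nat j) (N - j)"
    if "j \<le> N" for j
  proof -
    have "1 - u - of_nat (N - j) = 1 - u - of_nat N + of_nat j"
      using that by (simp add: of_nat_diff)
    then have "pochhammer (1 - u - of_nat N + of_nat j) (N - j) = (- 1) ^ (N - j) * pochhammer u (N - j)"
      using pochhammer_reflect[of u "N - j"] by metis
    moreover have "(- 1) ^ N = (- 1) ^ j * ((- 1) ^ (N - j) :: 'a)"
      using that by (simp flip: power_add)
    ultimately show ?thesis
      by (simp add: mult_ac)
  qed
  have "(\<Sum>j=0..N. of_nat (N choose j) * pochhammer A j * pochhammer B j
            * ((- 1) ^ j * pochhammer u (N - j)) * pochhammer (1 - u - of_nat N - A - B) (N - j))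
      = (- 1) ^ N * (\<Sum>j=0..N. of_nat (N choose j) * pochhammer A j * pochhammer B j
            * pochhammer (1 - u - of_nat N + of_nat j) (N - j) * pochhammer (1 - u - of_nat N - A - B) (N - j))"
    unfolding sum_distrib_left
    by (intro sum.cong refl) (simp only: atLeastAtMost_iff reflect, simp only: mult_ac)
  also have "\<dots> = (- 1) ^ N * (pochhammer (1 - u - of_nat N - A) N * pochhammer (1 - u - of_nat N - B) N)"
    unfolding pfaff_saalschuetz ..
  also have "\<dots> = pochhammer (u + A) N * pochhammer (1 - u - B - of_nat N) N"
  proof -
    have reflect_A: "pochhammer (1 - u - of_nat N - A) N = (- 1) ^ N * pochhammer (u + A) N"
      using pochhammer_reflect[of "u + A" N] by (simp add: algebra_simps)
    have reorder_B: "1 - u - of_nat N - B = 1 - u - B - of_nat N"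
      by (simp add: algebra_simps)
    show ?thesis
      unfolding reflect_A reorder_B by (simp add: mult.assoc)
  qed
  finally show ?thesis .
qed

section \<open>Well-poised ratios\<close>

text \<open>\<open>wp_ratio a d e\<close> is the factor r_de of the summand of L_Q, and \<open>wp_coeff a d e\<close> are
  its coefficients in the basis (-n)_i (a+n)_i.\<close>

definition wp_ratio :: "'a::field \<Rightarrow> 'a \<Rightarrow> 'a \<Rightarrow> nat \<Rightarrow> 'a" where
  "wp_ratio a d e n = pochhammer d n * pochhammer e n / (pochhammer (1 + a - d) n * pochhammer (1 + a - e) n)"

definition wp_coeff :: "'a::field_char_0 \<Rightarrow> 'a \<Rightarrow> 'a \<Rightarrow> nat \<Rightarrow> 'a" where
  "wp_coeff a d e i = pochhammer (1 + a - d - e) i / (fact i * pochhammer (1 + a - d) i * pochhammer (1 + a - e) i)"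

lemma wp_ratio_expansion:
  fixes a b c :: "'a::field_char_0"
  assumes hb: "pochhammer (1 + a - b) n \<noteq> 0" and hc: "pochhammer (1 + a - c) n \<noteq> 0"
  shows "wp_ratio a b c n = (\<Sum>i=0..n. pochhammer (- of_nat n) i * pochhammer (a + of_nat n) i * wp_coeff a b c i)"
proof -
  define D where "D = pochhammer (1 + a - b) n * pochhammer (c - a - of_nat n) n"
  have reflect_c: "pochhammer (c - a - of_nat n) n = (- 1) ^ n * pochhammer (1 + a - c) n"
    using pochhammer_reflect[of "1 + a - c" n] by (simp add: algebra_simps)
  have reflect_b: "pochhammer (1 - b - of_nat n) n = (- 1) ^ n * pochhammer b n"
    using pochhammer_reflect[of b n] by simp
  have "D \<noteq> 0"
    using hb hc by (simp add: D_def reflect_c)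
  have summand: "pochhammer (- of_nat n) i * pochhammer (a + of_nat n) i * wp_coeff a b c i
      = of_nat (n choose i) * pochhammer (a + of_nat n) i * pochhammer (1 + a - b - c) i
        * pochhammer (1 + a - b + of_nat i) (n - i) * pochhammer (c - a - of_nat n) (n - i) / D"
    if "i \<le> n" for i
  proof -
    have split_b: "pochhammer (1 + a - b) n = pochhammer (1 + a - b) i * pochhammer (1 + a - b + of_nat i) (n - i)"
      using pochhammer_product[OF that] .
    have split_c: "pochhammer (c - a - of_nat n) n
        = (- 1) ^ i * pochhammer (c - a - of_nat n) (n - i) * pochhammer (1 + a - c) i"
      using pochhammer_split_reflected[OF that, of "c - a - of_nat n"] by (simp add: algebra_simps)
    have "pochhammer (1 + a - b) i \<noteq> 0" "pochhammer (1 + a - b + of_nat i) (n - i) \<noteq> 0"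
      "pochhammer (1 + a - c) i \<noteq> 0" "pochhammer (c - a - of_nat n) (n - i) \<noteq> 0"
      using \<open>D \<noteq> 0\<close> unfolding D_def split_b split_c by auto
    then show ?thesis
      unfolding wp_coeff_def D_def split_b split_c pochhammer_neg_of_nat by (simp add: field_simps)
  qed
  have "(\<Sum>i=0..n. pochhammer (- of_nat n) i * pochhammer (a + of_nat n) i * wp_coeff a b c i)
      = (\<Sum>i=0..n. of_nat (n choose i) * pochhammer (a + of_nat n) i * pochhammer (1 + a - b - c) i
          * pochhammer (1 + a - b + of_nat i) (n - i) * pochhammer (c - a - of_nat n) (n - i)) / D"
    by (simp add: summand sum_divide_distrib)
  also have "\<dots> = pochhammer (1 - b - of_nat n) n * pochhammer c n / D"
    using pfaff_saalschuetz[of n "a + of_nat n" "1 + a - b - c" "1 + a - b"] by (simp add: algebra_simps)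
  also have "\<dots> = wp_ratio a b c n"
    using hb hc unfolding wp_ratio_def D_def reflect_b reflect_c by (simp add: field_simps)
  finally show ?thesis ..
qed

lemma wp_ratio_expansion_upto:
  fixes a b c :: "'a::field_char_0"
  assumes "pochhammer (1 + a - b) N \<noteq> 0" "pochhammer (1 + a - c) N \<noteq> 0" "n \<le> N"
  shows "wp_ratio a b c n = (\<Sum>i=0..N. pochhammer (- of_nat n) i * pochhammer (a + of_nat n) i * wp_coeff a b c i)"
proof -
  have "wp_ratio a b c n = (\<Sum>i=0..n. pochhammer (- of_nat n) i * pochhammer (a + of_nat n) i * wp_coeff a b c i)"
    using wp_ratio_expansion[OF pochhammer_neq_0_mono[OF assms(1,3)] pochhammer_neq_0_mono[OF assms(2,3)]] .
  also have "\<dots> = (\<Sum>i=0..N. pochhammer (- of_nat n) i * pochhammer (a + of_nat n) i * wp_coeff a b c i)"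
    using assms(3) by (intro sum.mono_neutral_left) (auto simp: pochhammer_of_nat_eq_0_lemma)
  finally show ?thesis .
qed

lemma wp_ratio_split:
  fixes a d e :: "'a::field_char_0"
  assumes hd: "pochhammer (1 + a - d) (i + m) \<noteq> 0" and he: "pochhammer (1 + a - e) (i + m) \<noteq> 0"
  shows "wp_ratio a d e (i + m) = wp_ratio a d e i * wp_ratio (a + 2 * of_nat i) (d + of_nat i) (e + of_nat i) m"
proof -
  have shift_d: "1 + (a + 2 * of_nat i) - (d + of_nat i) = 1 + a - d + of_nat i"
    and shift_e: "1 + (a + 2 * of_nat i) - (e + of_nat i) = 1 + a - e + of_nat i"
    by simp_all
  have split_d: "pochhammer (1 + a - d) (i + m) = pochhammer (1 + a - d) i * pochhammer (1 + a - d + of_nat i) m"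
    and split_e: "pochhammer (1 + a - e) (i + m) = pochhammer (1 + a - e) i * pochhammer (1 + a - e + of_nat i) m"
    by (rule pochhammer_product')+
  have "pochhammer (1 + a - d) i \<noteq> 0" "pochhammer (1 + a - d + of_nat i) m \<noteq> 0"
    "pochhammer (1 + a - e) i \<noteq> 0" "pochhammer (1 + a - e + of_nat i) m \<noteq> 0"
    using hd he unfolding split_d split_e by auto
  then show ?thesis
    unfolding wp_ratio_def shift_d shift_e split_d split_e pochhammer_product'[of d i m] pochhammer_product'[of e i m]
    by (simp add: field_simps)
qed

section \<open>The very-well-poised weight\<close>

definition vwp_weight :: "'a::field_char_0 \<Rightarrow> nat \<Rightarrow> nat \<Rightarrow> 'a" where
  "vwp_weight a N n = pochhammer a n * pochhammer (1 + a / 2) n * pochhammer (- of_nat N) n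
     / (fact n * pochhammer (a / 2) n * pochhammer (1 + a + of_nat N) n)"

lemma vwp_weight_alt:
  fixes a :: "'a::field_char_0"
  assumes "a \<noteq> 0" "pochhammer (a / 2) n \<noteq> 0"
  shows "vwp_weight a N n = (a + 2 * of_nat n) / a * pochhammer a n * pochhammer (- of_nat N) n
     / (fact n * pochhammer (1 + a + of_nat N) n)"
proof -
  have "vwp_weight a N n = pochhammer a n * (pochhammer (1 + a / 2) n / pochhammer (a / 2) n)
      * pochhammer (- of_nat N) n / (fact n * pochhammer (1 + a + of_nat N) n)"
    by (simp add: vwp_weight_def mult_ac)
  then show ?thesis
    unfolding pochhammer_half_ratio[OF assms] by (simp add: mult_ac)
qed

text \<open>For N = M + j, the summand of \<open>vwp_weight_dual_sum\<close> is (-1)^j (-N)_j times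
  \<open>vwp_dual_summand a M j n\<close>, whose antidifference in n is \<open>vwp_dual_antidiff a M j\<close>.\<close>

definition vwp_dual_summand :: "'a::field_char_0 \<Rightarrow> nat \<Rightarrow> nat \<Rightarrow> nat \<Rightarrow> 'a" where
  "vwp_dual_summand a M j n = (a + 2 * of_nat n) / a * pochhammer a n * pochhammer (- of_nat M) n
     * pochhammer (1 + a + of_nat (M + n)) j / (fact n * pochhammer (1 + a + of_nat (M + j)) n)"

definition vwp_dual_antidiff :: "'a::field_char_0 \<Rightarrow> nat \<Rightarrow> nat \<Rightarrow> nat \<Rightarrow> 'a" where
  "vwp_dual_antidiff a M j m = pochhammer (a + 1) m * pochhammer (1 - of_nat M) m
     * pochhammer (1 + a + of_nat (M + m)) j / (fact m * pochhammer (1 + a + of_nat (M + j)) m)"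

lemma vwp_dual_antidiff_Suc:
  fixes a :: "'a::field_char_0"
  assumes a: "a \<noteq> 0" and nonzero_Suc: "pochhammer (1 + a + of_nat (M + j)) (Suc m) \<noteq> 0"
  shows "vwp_dual_antidiff a M j (Suc m) = vwp_dual_antidiff a M j m + vwp_dual_summand a M j (Suc m)"
proof -
  define b where "b = 1 + a + of_nat (M + m)"
  define r where "r = b + of_nat j"
  define s where "s = 1 + (of_nat m :: 'a)"
  define P where "P = pochhammer (1 + a + of_nat (M + j)) m"
  have P_Suc: "pochhammer (1 + a + of_nat (M + j)) (Suc m) = P * r"
    by (simp add: P_def r_def b_def pochhammer_Suc algebra_simps)
  have b_Suc: "1 + a + of_nat (M + Suc m) = b + 1"
    by (simp add: b_def)
  have fact_Suc: "fact (Suc m) = s * (fact m :: 'a)"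
    by (simp add: s_def)
  have "P \<noteq> 0" "r \<noteq> 0"
    using nonzero_Suc unfolding P_Suc by simp_all
  have "s \<noteq> 0"
    using of_nat_neq_0[of m] by (simp add: s_def add.commute)
  note nonzero = a \<open>P \<noteq> 0\<close> \<open>r \<noteq> 0\<close> \<open>s \<noteq> 0\<close>
  have "pochhammer b j * r = b * pochhammer (b + 1) j"
    using pochhammer_shift_one[of b j] by (simp add: r_def mult.commute)
  then have shift: "pochhammer b j = b * pochhammer (b + 1) j / r"
    using \<open>r \<noteq> 0\<close> by (simp add: field_simps)
  define W where "W = pochhammer (a + 1) m * pochhammer (1 - of_nat M) m * pochhammer (b + 1) j
      / (s * fact m * P * r)"
  have antidiff: "vwp_dual_antidiff a M j m = s * b * W"
    unfolding vwp_dual_antidiff_def P_def[symmetric] b_def[symmetric] shift W_def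
    using nonzero by (simp add: field_simps)
  have summand: "vwp_dual_summand a M j (Suc m) = - of_nat M * (a + 2 * of_nat m + 2) * W"
    unfolding vwp_dual_summand_def P_Suc b_Suc fact_Suc W_def pochhammer_rec[of a] pochhammer_rec[of "- of_nat M"]
    using nonzero by (simp add: field_simps)
  have antidiff_Suc: "vwp_dual_antidiff a M j (Suc m) = (a + 1 + of_nat m) * (1 - of_nat M + of_nat m) * W"
    unfolding vwp_dual_antidiff_def P_Suc b_Suc fact_Suc W_def
    using nonzero by (simp add: pochhammer_Suc field_simps)
  show ?thesis
    unfolding antidiff summand antidiff_Suc by (simp add: s_def b_def algebra_simps)
qed

lemma vwp_dual_summand_sum:
  fixes a :: "'a::field_char_0"
  assumes "a \<noteq> 0" "pochhammer (1 + a + of_nat (M + j)) m \<noteq> 0"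
  shows "(\<Sum>n=0..m. vwp_dual_summand a M j n) = vwp_dual_antidiff a M j m"
  using assms(2)
proof (induction m)
  case 0
  then show ?case
    using assms(1) by (simp add: vwp_dual_summand_def vwp_dual_antidiff_def)
next
  case (Suc m)
  have "pochhammer (1 + a + of_nat (M + j)) m \<noteq> 0"
    using Suc.prems by (rule pochhammer_neq_0_mono) simp
  with Suc show ?case
    by (simp add: vwp_dual_antidiff_Suc[OF assms(1)])
qed

lemma vwp_weight_dual_summand:
  fixes a :: "'a::field_char_0"
  assumes "a \<noteq> 0" "pochhammer (a / 2) n \<noteq> 0" and N: "N = M + j"
  shows "vwp_weight a N n * pochhammer (of_nat n - of_nat N) j * pochhammer (- a - of_nat N - of_nat n) j
    = (- 1) ^ j * pochhammer (- of_nat N) j * vwp_dual_summand a M j n"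
proof -
  have "- of_nat N + of_nat n = (of_nat n - of_nat N :: 'a)" "- of_nat N + of_nat j = (- of_nat M :: 'a)"
    by (simp_all add: N)
  then have "pochhammer (- of_nat N) n * pochhammer (of_nat n - of_nat N) j
      = (pochhammer (- of_nat N) j * pochhammer (- of_nat M) n :: 'a)"
    using pochhammer_product'[of "- of_nat N :: 'a" n j] pochhammer_product'[of "- of_nat N :: 'a" j n]
    by (metis add.commute)
  moreover have "pochhammer (- a - of_nat N - of_nat n) j = (- 1) ^ j * pochhammer (1 + a + of_nat (M + n)) j"
    using pochhammer_reflect[of "1 + a + of_nat (M + n)" j] by (simp add: N algebra_simps)
  ultimately show ?thesis
    using assms by (simp add: vwp_weight_alt vwp_dual_summand_def N field_simps)
qed

lemma vwp_dual_antidiff_top: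
  fixes a :: "'a::field_char_0"
  assumes "pochhammer (1 + a + of_nat N) N \<noteq> 0" and N: "N = M + j"
  shows "vwp_dual_antidiff a M j N = (if j = N then pochhammer (1 + a) N else 0)"
proof (cases "M = 0")
  case True
  then show ?thesis
    using assms by (simp add: vwp_dual_antidiff_def add.commute flip: pochhammer_fact)
next
  case False
  have "pochhammer (1 - of_nat M) N = pochhammer (- (of_nat (M - 1) :: 'a)) N"
    using False by (simp add: of_nat_diff)
  also have "\<dots> = 0"
    using False by (intro pochhammer_of_nat_eq_0_lemma) (simp add: N)
  finally show ?thesis
    using False N by (simp add: vwp_dual_antidiff_def)
qed

lemma vwp_weight_dual_sum:
  fixes a :: "'a::field_char_0"
  assumes hA: "pochhammer (a / 2) N \<noteq> 0" and hB: "pochhammer (1 + a + of_nat N) N \<noteq> 0"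
  shows "(\<Sum>n=0..N. vwp_weight a N n * pochhammer (of_nat n - of_nat N) j
            * pochhammer (- a - of_nat N - of_nat n) j)
         = (if j = N then fact N * pochhammer (1 + a) N else 0)"
proof (cases "j \<le> N")
  case False
  then show ?thesis
    by (simp add: pochhammer_of_nat_diff_eq_0)
next
  case True
  then obtain M where N: "N = M + j"
    using le_Suc_ex by (metis add.commute)
  show ?thesis
  proof (cases "N = 0")
    case True
    then show ?thesis
      using N by (simp add: vwp_weight_def)
  next
    case False
    then have "a \<noteq> 0"
      using neq_0_if_pochhammer_half_neq_0[OF hA] by simp
    have "(\<Sum>n=0..N. vwp_weight a N n * pochhammer (of_nat n - of_nat N) j
            * pochhammer (- a - of_nat N - of_nat n) j)
        = (\<Sum>n=0..N. (- 1) ^ j * pochhammer (- of_nat N) j * vwp_dual_summand a M j n)"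
      using vwp_weight_dual_summand[OF \<open>a \<noteq> 0\<close> pochhammer_neq_0_mono[OF hA] N] by (intro sum.cong) auto
    also have "\<dots> = (- 1) ^ j * pochhammer (- of_nat N) j * (\<Sum>n=0..N. vwp_dual_summand a M j n)"
      by (simp only: sum_distrib_left)
    also have "(\<Sum>n=0..N. vwp_dual_summand a M j n) = vwp_dual_antidiff a M j N"
      using vwp_dual_summand_sum[OF \<open>a \<noteq> 0\<close>, of M j N] hB by (simp add: N)
    finally show ?thesis
      by (simp add: vwp_dual_antidiff_top[OF hB N] pochhammer_same)
  qed
qed

lemma vwp_nonvanishing_shift:
  fixes a :: "'a::field_char_0"
  assumes "pochhammer (a / 2) N \<noteq> 0" "pochhammer (1 + a + of_nat N) N \<noteq> 0" "i \<le> N"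
  shows "pochhammer ((a + 2 * of_nat i) / 2) (N - i) \<noteq> 0"
    and "pochhammer (1 + (a + 2 * of_nat i) + of_nat (N - i)) (N - i) \<noteq> 0"
proof -
  have "(a + 2 * of_nat i) / 2 = a / 2 + of_nat i"
    by (simp add: add_divide_distrib)
  then show "pochhammer ((a + 2 * of_nat i) / 2) (N - i) \<noteq> 0"
    using pochhammer_shift_neq_0[OF assms(1,3)] by metis
  have "1 + (a + 2 * of_nat i) + of_nat (N - i) = 1 + a + of_nat N + of_nat i"
    using assms(3) by (simp add: of_nat_diff)
  then show "pochhammer (1 + (a + 2 * of_nat i) + of_nat (N - i)) (N - i) \<noteq> 0"
    using pochhammer_shift_neq_0[OF assms(2,3)] by metis
qed

definition vwp_shift_factor :: "'a::field_char_0 \<Rightarrow> nat \<Rightarrow> nat \<Rightarrow> 'a" where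
  "vwp_shift_factor a N i = (- 1) ^ i * pochhammer a (2 * i) * (pochhammer (1 + a / 2) i / pochhammer (a / 2) i)
     * pochhammer (- of_nat N) i / pochhammer (1 + a + of_nat N) i"

lemma vwp_weight_shift:
  fixes a :: "'a::field_char_0"
  assumes hA: "pochhammer (a / 2) (i + m) \<noteq> 0" and hB: "pochhammer (1 + a + of_nat N) (i + m) \<noteq> 0"
    and "i + m \<le> N"
  shows "vwp_weight a N (i + m) * pochhammer (- of_nat (i + m)) i * pochhammer (a + of_nat (i + m)) i
     = vwp_shift_factor a N i * vwp_weight (a + 2 * of_nat i) (N - i) m"
proof -
  have "pochhammer a (i + m) * pochhammer (a + of_nat (i + m)) i = pochhammer a (i + m + i)"
    by (rule pochhammer_product'[symmetric])
  also have "i + m + i = 2 * i + m"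
    by simp
  finally have p1: "pochhammer a (i + m) * pochhammer (a + of_nat (i + m)) i
      = pochhammer a (2 * i) * pochhammer (a + 2 * of_nat i) m"
    by (simp add: pochhammer_product')
  have p2: "pochhammer (1 + a / 2) (i + m) = pochhammer (1 + a / 2) i * pochhammer (1 + (a + 2 * of_nat i) / 2) m"
    by (simp add: pochhammer_product' add_divide_distrib algebra_simps)
  have p3: "pochhammer (a / 2) (i + m) = pochhammer (a / 2) i * pochhammer ((a + 2 * of_nat i) / 2) m"
    by (simp add: pochhammer_product' add_divide_distrib algebra_simps)
  have p4: "pochhammer (- of_nat N) (i + m) = pochhammer (- of_nat N) i * (pochhammer (- of_nat (N - i)) m :: 'a)"
    using assms(3) by (simp add: pochhammer_product' of_nat_diff algebra_simps)
  have p5: "pochhammer (1 + a + of_nat N) (i + m)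
      = pochhammer (1 + a + of_nat N) i * pochhammer (1 + (a + 2 * of_nat i) + of_nat (N - i)) m"
    using assms(3) by (simp add: pochhammer_product' of_nat_diff algebra_simps)
  have p6: "pochhammer (- of_nat (i + m)) i = (- 1) ^ i * (pochhammer (of_nat m + 1) i :: 'a)"
    using pochhammer_minus[of "of_nat (i + m) :: 'a" i] by (simp add: algebra_simps)
  have fact_split: "fact (i + m) = fact m * (pochhammer (of_nat m + 1) i :: 'a)"
    using fact_add_pochhammer[of m i] by (simp add: add.commute)
  have nonzero: "pochhammer (a / 2) i \<noteq> 0" "pochhammer ((a + 2 * of_nat i) / 2) m \<noteq> 0"
    "pochhammer (1 + a + of_nat N) i \<noteq> 0" "pochhammer (1 + (a + 2 * of_nat i) + of_nat (N - i)) m \<noteq> 0"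
    "pochhammer (of_nat m + 1 :: 'a) i \<noteq> 0"
    using hA hB fact_nonzero[of "i + m", where 'a='a] unfolding p3 p5 fact_split by auto
  have "vwp_weight a N (i + m) * pochhammer (- of_nat (i + m)) i * pochhammer (a + of_nat (i + m)) i
      = (pochhammer a (i + m) * pochhammer (a + of_nat (i + m)) i) * pochhammer (1 + a / 2) (i + m)
        * pochhammer (- of_nat N) (i + m) * pochhammer (- of_nat (i + m)) i
        / (fact (i + m) * pochhammer (a / 2) (i + m) * pochhammer (1 + a + of_nat N) (i + m))"
    unfolding vwp_weight_def by (simp add: field_simps)
  also have "\<dots> = (pochhammer a (2 * i) * pochhammer (a + 2 * of_nat i) m)
        * (pochhammer (1 + a / 2) i * pochhammer (1 + (a + 2 * of_nat i) / 2) m)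
        * (pochhammer (- of_nat N) i * pochhammer (- of_nat (N - i)) m)
        * ((- 1) ^ i * pochhammer (of_nat m + 1) i)
        / ((fact m * pochhammer (of_nat m + 1) i) * (pochhammer (a / 2) i * pochhammer ((a + 2 * of_nat i) / 2) m)
          * (pochhammer (1 + a + of_nat N) i * pochhammer (1 + (a + 2 * of_nat i) + of_nat (N - i)) m))"
    unfolding p1 p2 p3 p4 p5 p6 fact_split ..
  also have "\<dots> = vwp_shift_factor a N i * vwp_weight (a + 2 * of_nat i) (N - i) m"
    unfolding vwp_shift_factor_def vwp_weight_def using nonzero by (simp add: field_simps)
  finally show ?thesis .
qed

lemma vwp_shift_factor_mult:
  fixes a :: "'a::field_char_0"
  assumes hA: "pochhammer (a / 2) N \<noteq> 0" and hB: "pochhammer (1 + a + of_nat N) N \<noteq> 0" and "i \<le> N"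
  shows "vwp_shift_factor a N i * pochhammer (1 + (a + 2 * of_nat i)) (N - i)
     = (- 1) ^ i * pochhammer (- of_nat N) i * pochhammer (1 + a) N"
proof (cases "i = 0")
  case True
  then show ?thesis
    by (simp add: vwp_shift_factor_def)
next
  case False
  then have "a \<noteq> 0"
    using neq_0_if_pochhammer_half_neq_0[OF hA] assms(3) by simp
  have "pochhammer (a / 2) i \<noteq> 0" "pochhammer (1 + a + of_nat N) i \<noteq> 0"
    using pochhammer_neq_0_mono[OF hA assms(3)] pochhammer_neq_0_mono[OF hB assms(3)] .
  have "pochhammer a (2 * i) * (a + 2 * of_nat i) * pochhammer (1 + (a + 2 * of_nat i)) (N - i)
      = pochhammer a (2 * i) * pochhammer (a + of_nat (2 * i)) (Suc (N - i))"
    by (simp add: pochhammer_rec algebra_simps)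
  also have "\<dots> = pochhammer a (2 * i + Suc (N - i))"
    by (rule pochhammer_product'[symmetric])
  also have "2 * i + Suc (N - i) = Suc (N + i)"
    using assms(3) by simp
  also have "pochhammer a (Suc (N + i)) = a * (pochhammer (1 + a) N * pochhammer (1 + a + of_nat N) i)"
    by (simp add: pochhammer_rec pochhammer_product' add.commute)
  finally have prod: "pochhammer a (2 * i) * (a + 2 * of_nat i) * pochhammer (1 + (a + 2 * of_nat i)) (N - i)
      = a * (pochhammer (1 + a) N * pochhammer (1 + a + of_nat N) i)" .
  have "vwp_shift_factor a N i * pochhammer (1 + (a + 2 * of_nat i)) (N - i)
      = (- 1) ^ i * pochhammer (- of_nat N) i
        * (pochhammer a (2 * i) * (a + 2 * of_nat i) * pochhammer (1 + (a + 2 * of_nat i)) (N - i))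
        / (a * pochhammer (1 + a + of_nat N) i)"
    unfolding vwp_shift_factor_def pochhammer_half_ratio[OF \<open>a \<noteq> 0\<close> \<open>pochhammer (a / 2) i \<noteq> 0\<close>]
    using \<open>a \<noteq> 0\<close> \<open>pochhammer (1 + a + of_nat N) i \<noteq> 0\<close> by (simp add: field_simps)
  also have "\<dots> = (- 1) ^ i * pochhammer (- of_nat N) i * pochhammer (1 + a) N"
    unfolding prod using \<open>a \<noteq> 0\<close> \<open>pochhammer (1 + a + of_nat N) i \<noteq> 0\<close> by (simp add: field_simps)
  finally show ?thesis .
qed

lemma vwp_sum_shift:
  fixes a :: "'a::field_char_0" and h :: "nat \<Rightarrow> 'a"
  assumes hA: "pochhammer (a / 2) N \<noteq> 0" and hB: "pochhammer (1 + a + of_nat N) N \<noteq> 0" and "i \<le> N"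
  shows "(\<Sum>n=0..N. vwp_weight a N n * pochhammer (- of_nat n) i * pochhammer (a + of_nat n) i * h n)
     = vwp_shift_factor a N i * (\<Sum>m=0..N-i. vwp_weight (a + 2 * of_nat i) (N - i) m * h (i + m))"
proof -
  let ?f = "\<lambda>n. vwp_weight a N n * pochhammer (- of_nat n) i * pochhammer (a + of_nat n) i * h n"
  have "(\<Sum>n=0..N. ?f n) = (\<Sum>n=i..N. ?f n)"
    by (intro sum.mono_neutral_right) (auto simp: pochhammer_of_nat_eq_0_lemma)
  also have "\<dots> = (\<Sum>m=0..N-i. ?f (i + m))"
    using sum.shift_bounds_cl_nat_ivl[of ?f 0 i "N - i"] assms(3) by (simp add: add.commute)
  also have "\<dots> = (\<Sum>m=0..N-i. vwp_shift_factor a N i * (vwp_weight (a + 2 * of_nat i) (N - i) m * h (i + m)))"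
  proof (rule sum.cong[OF refl])
    fix m
    assume "m \<in> {0..N-i}"
    then have "i + m \<le> N"
      using assms(3) by simp
    show "?f (i + m) = vwp_shift_factor a N i * (vwp_weight (a + 2 * of_nat i) (N - i) m * h (i + m))"
      unfolding vwp_weight_shift[OF pochhammer_neq_0_mono[OF hA \<open>i + m \<le> N\<close>]
          pochhammer_neq_0_mono[OF hB \<open>i + m \<le> N\<close>] \<open>i + m \<le> N\<close>]
      by (simp only: mult.assoc)
  qed
  finally show ?thesis
    by (simp only: sum_distrib_left)
qed

lemma vwp_biorthogonality:
  fixes a :: "'a::field_char_0"
  assumes hA: "pochhammer (a / 2) N \<noteq> 0" and hB: "pochhammer (1 + a + of_nat N) N \<noteq> 0"
  shows "(\<Sum>n=0..N. vwp_weight a N n * pochhammer (- of_nat n) i * pochhammer (a + of_nat n) i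
            * pochhammer (of_nat n - of_nat N) j * pochhammer (- a - of_nat N - of_nat n) j)
         = (if i + j = N then fact N * pochhammer (1 + a) N else 0)"
proof (cases "i \<le> N")
  case False
  then show ?thesis
    by (simp add: pochhammer_of_nat_eq_0_lemma)
next
  case True
  have "(\<Sum>n=0..N. vwp_weight a N n * pochhammer (- of_nat n) i * pochhammer (a + of_nat n) i
            * pochhammer (of_nat n - of_nat N) j * pochhammer (- a - of_nat N - of_nat n) j)
      = (\<Sum>n=0..N. vwp_weight a N n * pochhammer (- of_nat n) i * pochhammer (a + of_nat n) i
            * (pochhammer (of_nat n - of_nat N) j * pochhammer (- a - of_nat N - of_nat n) j))"
    by (simp only: mult.assoc)
  also have "\<dots> = vwp_shift_factor a N i * (\<Sum>m=0..N-i. vwp_weight (a + 2 * of_nat i) (N - i) m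
      * (pochhammer (of_nat (i + m) - of_nat N) j * pochhammer (- a - of_nat N - of_nat (i + m)) j))"
    by (rule vwp_sum_shift[OF hA hB True])
  also have "\<dots> = vwp_shift_factor a N i * (\<Sum>m=0..N-i. vwp_weight (a + 2 * of_nat i) (N - i) m
      * pochhammer (of_nat m - of_nat (N - i)) j * pochhammer (- (a + 2 * of_nat i) - of_nat (N - i) - of_nat m) j)"
  proof -
    have "(of_nat (i + m) - of_nat N :: 'a) = of_nat m - of_nat (N - i)"
      and "- a - of_nat N - of_nat (i + m) = - (a + 2 * of_nat i) - of_nat (N - i) - of_nat m" for m
      using True by (simp_all add: of_nat_diff algebra_simps)
    then show ?thesis
      by (simp only: mult.assoc)
  qed
  also have "\<dots> = vwp_shift_factor a N i
      * (if j = N - i then fact (N - i) * pochhammer (1 + (a + 2 * of_nat i)) (N - i) else 0)"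
    unfolding vwp_weight_dual_sum[OF vwp_nonvanishing_shift[OF hA hB True]] ..
  also have "\<dots> = (if i + j = N then fact N * pochhammer (1 + a) N else 0)"
  proof -
    have "vwp_shift_factor a N i * (fact (N - i) * pochhammer (1 + (a + 2 * of_nat i)) (N - i))
        = (- 1) ^ i * pochhammer (- of_nat N) i * fact (N - i) * pochhammer (1 + a) N"
      using vwp_shift_factor_mult[OF hA hB True] by (simp add: mult_ac)
    also have "\<dots> = fact N * pochhammer (1 + a) N"
      unfolding pochhammer_neg_of_nat_mult_fact[OF True] ..
    finally show ?thesis
      using True by auto
  qed
  finally show ?thesis .
qed

section \<open>Sums against polynomials in the dual basis\<close>

lemma vwp_wp_ratio_dual_series:
  fixes a d e :: "'a::field_char_0" and w :: "nat \<Rightarrow> 'a"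
  assumes hA: "pochhammer (a / 2) N \<noteq> 0" and hB: "pochhammer (1 + a + of_nat N) N \<noteq> 0"
    and hd: "pochhammer (1 + a - d) N \<noteq> 0" and he: "pochhammer (1 + a - e) N \<noteq> 0"
  shows "(\<Sum>n=0..N. vwp_weight a N n * wp_ratio a d e n
            * (\<Sum>j=0..k. pochhammer (of_nat n - of_nat N) j * pochhammer (- a - of_nat N - of_nat n) j * w j))
         = fact N * pochhammer (1 + a) N * (\<Sum>j=0..k. if j \<le> N then wp_coeff a d e (N - j) * w j else 0)"
proof -
  define F where "F = fact N * pochhammer (1 + a) N"
  define G where "G i j n = vwp_weight a N n * pochhammer (- of_nat n) i * pochhammer (a + of_nat n) i
      * pochhammer (of_nat n - of_nat N) j * pochhammer (- a - of_nat N - of_nat n) j" for i j n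
  have "vwp_weight a N n * wp_ratio a d e n
        * (\<Sum>j=0..k. pochhammer (of_nat n - of_nat N) j * pochhammer (- a - of_nat N - of_nat n) j * w j)
      = (\<Sum>i=0..N. \<Sum>j=0..k. wp_coeff a d e i * w j * G i j n)" if "n \<le> N" for n
  proof -
    let ?A = "\<lambda>i. pochhammer (- of_nat n) i * pochhammer (a + of_nat n) i * wp_coeff a d e i"
    let ?B = "\<lambda>j. pochhammer (of_nat n - of_nat N) j * pochhammer (- a - of_nat N - of_nat n) j * w j"
    have "vwp_weight a N n * wp_ratio a d e n * sum ?B {0..k} = vwp_weight a N n * (sum ?A {0..N} * sum ?B {0..k})"
      unfolding wp_ratio_expansion_upto[OF hd he that] by (simp only: mult.assoc)
    also have "sum ?A {0..N} * sum ?B {0..k} = (\<Sum>i=0..N. \<Sum>j=0..k. ?A i * ?B j)"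
      by (rule sum_product)
    also have "vwp_weight a N n * \<dots> = (\<Sum>i=0..N. \<Sum>j=0..k. vwp_weight a N n * (?A i * ?B j))"
      by (simp add: sum_distrib_left)
    also have "\<dots> = (\<Sum>i=0..N. \<Sum>j=0..k. wp_coeff a d e i * w j * G i j n)"
      unfolding G_def by (intro sum.cong refl) (simp only: mult_ac)
    finally show ?thesis .
  qed
  then have "(\<Sum>n=0..N. vwp_weight a N n * wp_ratio a d e n
            * (\<Sum>j=0..k. pochhammer (of_nat n - of_nat N) j * pochhammer (- a - of_nat N - of_nat n) j * w j))
      = (\<Sum>n=0..N. \<Sum>i=0..N. \<Sum>j=0..k. wp_coeff a d e i * w j * G i j n)"
    by (intro sum.cong) auto
  also have "\<dots> = (\<Sum>i=0..N. \<Sum>n=0..N. \<Sum>j=0..k. wp_coeff a d e i * w j * G i j n)"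
    by (rule sum.swap)
  also have "\<dots> = (\<Sum>i=0..N. \<Sum>j=0..k. \<Sum>n=0..N. wp_coeff a d e i * w j * G i j n)"
    by (intro sum.cong refl sum.swap)
  also have "\<dots> = (\<Sum>i=0..N. \<Sum>j=0..k. wp_coeff a d e i * w j * (\<Sum>n=0..N. G i j n))"
    by (simp only: sum_distrib_left)
  also have "\<dots> = (\<Sum>j=0..k. \<Sum>i=0..N. wp_coeff a d e i * w j * (if i + j = N then F else 0))"
    unfolding G_def F_def vwp_biorthogonality[OF hA hB] by (rule sum.swap)
  also have "\<dots> = (\<Sum>j=0..k. F * (if j \<le> N then wp_coeff a d e (N - j) * w j else 0))"
  proof (rule sum.cong)
    fix j
    have "(\<Sum>i=0..N. wp_coeff a d e i * w j * (if i + j = N then F else 0))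
        = (\<Sum>i=0..N. if i = N - j \<and> j \<le> N then F * (wp_coeff a d e i * w j) else 0)"
      by (intro sum.cong) auto
    then show "(\<Sum>i=0..N. wp_coeff a d e i * w j * (if i + j = N then F else 0))
        = F * (if j \<le> N then wp_coeff a d e (N - j) * w j else 0)"
      by (cases "j \<le> N") (simp_all add: sum.delta)
  qed simp
  finally show ?thesis
    by (simp add: F_def sum_distrib_left)
qed

lemma wp_coeff_complement:
  fixes a d e :: "'a::field_char_0"
  assumes hd: "pochhammer (1 + a - d) N \<noteq> 0" and he: "pochhammer (1 + a - e) N \<noteq> 0" and "j \<le> N"
  shows "fact N * wp_coeff a d e (N - j) / (fact j * pochhammer (d - a - of_nat N) j * pochhammer (e - a - of_nat N) j)
    = of_nat (N choose j) * pochhammer (1 + a - d - e) (N - j) / (pochhammer (1 + a - d) N * pochhammer (1 + a - e) N)"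
proof -
  have split_d: "pochhammer (1 + a - d) N = (- 1) ^ j * pochhammer (1 + a - d) (N - j) * pochhammer (d - a - of_nat N) j"
    and split_e: "pochhammer (1 + a - e) N = (- 1) ^ j * pochhammer (1 + a - e) (N - j) * pochhammer (e - a - of_nat N) j"
    using pochhammer_split_reflected[OF \<open>j \<le> N\<close>, of "1 + a - d"] pochhammer_split_reflected[OF \<open>j \<le> N\<close>, of "1 + a - e"]
    by (simp_all add: algebra_simps)
  have "pochhammer (1 + a - d) (N - j) \<noteq> 0" "pochhammer (d - a - of_nat N) j \<noteq> 0"
    "pochhammer (1 + a - e) (N - j) \<noteq> 0" "pochhammer (e - a - of_nat N) j \<noteq> 0"
    using hd he unfolding split_d split_e by auto
  moreover have "(fact N :: 'a) = of_nat (fact j * fact (N - j) * (N choose j))"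
    using binomial_fact_lemma[OF \<open>j \<le> N\<close>] by simp
  moreover have "(- 1) ^ j * x * y * ((- 1) ^ j * u * v) = x * y * (u * v)" for x y u v :: 'a
  proof -
    have "(- 1) ^ j * x * y * ((- 1) ^ j * u * v) = ((- 1) ^ j * (- 1) ^ j) * (x * y * (u * v))"
      by (simp only: mult_ac)
    then show ?thesis
      by simp
  qed
  ultimately show ?thesis
    unfolding wp_coeff_def split_d split_e by (simp add: field_simps)
qed

lemma vwp_wp_ratio_terminating_series:
  fixes a d e :: "'a::field_char_0" and x :: "nat \<Rightarrow> 'a"
  assumes hA: "pochhammer (a / 2) N \<noteq> 0" and hB: "pochhammer (1 + a + of_nat N) N \<noteq> 0"
    and hd: "pochhammer (1 + a - d) N \<noteq> 0" and he: "pochhammer (1 + a - e) N \<noteq> 0"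
  shows "(\<Sum>n=0..N. vwp_weight a N n * wp_ratio a d e n
            * (\<Sum>j=0..k. pochhammer (of_nat n - of_nat N) j * pochhammer (- a - of_nat N - of_nat n) j
                * (pochhammer (- of_nat k) j * x j
                   / (fact j * pochhammer (d - a - of_nat N) j * pochhammer (e - a - of_nat N) j))))
         = pochhammer (1 + a) N / (pochhammer (1 + a - d) N * pochhammer (1 + a - e) N)
            * (\<Sum>j=0..N. of_nat (N choose j) * pochhammer (- of_nat k) j * x j * pochhammer (1 + a - d - e) (N - j))"
proof -
  let ?w = "\<lambda>j. pochhammer (- of_nat k) j * x j
      / (fact j * pochhammer (d - a - of_nat N) j * pochhammer (e - a - of_nat N) j)"
  let ?D = "pochhammer (1 + a - d) N * pochhammer (1 + a - e) N"
  have "(\<Sum>n=0..N. vwp_weight a N n * wp_ratio a d e n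
            * (\<Sum>j=0..k. pochhammer (of_nat n - of_nat N) j * pochhammer (- a - of_nat N - of_nat n) j * ?w j))
      = fact N * pochhammer (1 + a) N * (\<Sum>j=0..k. if j \<le> N then wp_coeff a d e (N - j) * ?w j else 0)"
    by (rule vwp_wp_ratio_dual_series[OF hA hB hd he])
  also have "\<dots> = pochhammer (1 + a) N * (\<Sum>j=0..k. if j \<le> N then fact N * wp_coeff a d e (N - j) * ?w j else 0)"
    unfolding sum_distrib_left by (intro sum.cong) auto
  also have "\<dots> = pochhammer (1 + a) N * (\<Sum>j=0..N. fact N * wp_coeff a d e (N - j) * ?w j)"
    by (subst sum_truncate_if_le) (simp_all add: pochhammer_of_nat_eq_0_lemma)
  also have "\<dots> = pochhammer (1 + a) N / ?D
      * (\<Sum>j=0..N. of_nat (N choose j) * pochhammer (- of_nat k) j * x j * pochhammer (1 + a - d - e) (N - j))"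
  proof -
    have "fact N * wp_coeff a d e (N - j) * ?w j
        = of_nat (N choose j) * pochhammer (- of_nat k) j * x j * pochhammer (1 + a - d - e) (N - j) / ?D"
      if "j \<le> N" for j
    proof -
      have "fact N * wp_coeff a d e (N - j) * ?w j = fact N * wp_coeff a d e (N - j)
          / (fact j * pochhammer (d - a - of_nat N) j * pochhammer (e - a - of_nat N) j)
          * (pochhammer (- of_nat k) j * x j)"
        by (simp add: mult_ac)
      also have "\<dots> = of_nat (N choose j) * pochhammer (1 + a - d - e) (N - j) / ?D * (pochhammer (- of_nat k) j * x j)"
        unfolding wp_coeff_complement[OF hd he that] ..
      finally show ?thesis
        by (simp add: mult_ac)
    qed
    then show ?thesis
      by (simp flip: sum_divide_distrib)
  qed
  finally show ?thesis .
qed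

lemma Q2_2_reflected:
  "Q2_2 k (of_nat N - of_nat n) (- a - 2 * of_nat N) \<beta> \<gamma>
     = (\<Sum>j=0..k. pochhammer (of_nat n - of_nat N) j * pochhammer (- a - of_nat N - of_nat n) j
         * (pochhammer (- of_nat k) j * 1 / (fact j * pochhammer \<beta> j * pochhammer \<gamma> j)))"
proof -
  have reflect: "- (of_nat N - of_nat n) = (of_nat n - of_nat N :: complex)"
    "of_nat N - of_nat n + (- a - 2 * of_nat N) = (- a - of_nat N - of_nat n :: complex)"
    by simp_all
  show ?thesis
    unfolding Q2_2_def reflect by (simp add: mult.assoc flip: times_divide_eq_right)
qed

lemma Q2_3_reflected:
  "Q2_3 k (of_nat N - of_nat n) (- a - 2 * of_nat N) \<beta> \<gamma> \<delta>
     = (\<Sum>j=0..k. pochhammer (of_nat n - of_nat N) j * pochhammer (- a - of_nat N - of_nat n) j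
         * (pochhammer (- of_nat k) j
            * (pochhammer (of_nat k - 1 - (- a - 2 * of_nat N) + \<beta> + \<gamma> + \<delta>) j / pochhammer \<delta> j)
            / (fact j * pochhammer \<beta> j * pochhammer \<gamma> j)))"
proof -
  have reflect: "- (of_nat N - of_nat n) = (of_nat n - of_nat N :: complex)"
    "of_nat N - of_nat n + (- a - 2 * of_nat N) = (- a - of_nat N - of_nat n :: complex)"
    by simp_all
  show ?thesis
    unfolding Q2_3_def reflect by (simp add: mult_ac flip: times_divide_eq_right)
qed

lemma vwp_wp_ratio_Q2_2_sum:
  fixes a d e :: complex
  assumes "pochhammer (a / 2) N \<noteq> 0" "pochhammer (1 + a + of_nat N) N \<noteq> 0"
    "pochhammer (1 + a - d) N \<noteq> 0" "pochhammer (1 + a - e) N \<noteq> 0"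
  shows "(\<Sum>n=0..N. vwp_weight a N n * wp_ratio a d e n
            * Q2_2 k (of_nat N - of_nat n) (- a - 2 * of_nat N) (d - a - of_nat N) (e - a - of_nat N))
         = pochhammer (1 + a) N * pochhammer (1 - of_nat k + a - d - e) N
            / (pochhammer (1 + a - d) N * pochhammer (1 + a - e) N)"
proof -
  have "(\<Sum>j=0..N. of_nat (N choose j) * pochhammer (- of_nat k) j * 1 * pochhammer (1 + a - d - e) (N - j))
      = pochhammer (- of_nat k + (1 + a - d - e)) N"
    using pochhammer_binomial_sum[of "- of_nat k" "1 + a - d - e" N] by (simp add: atMost_atLeast0)
  then show ?thesis
    unfolding Q2_2_reflected vwp_wp_ratio_terminating_series[OF assms] by (simp add: algebra_simps)
qed

lemma vwp_wp_ratio_Q2_3_sum: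
  fixes a d e f :: complex
  assumes "pochhammer (a / 2) N \<noteq> 0" "pochhammer (1 + a + of_nat N) N \<noteq> 0"
    "pochhammer (1 + a - d) N \<noteq> 0" "pochhammer (1 + a - e) N \<noteq> 0"
    and hf: "pochhammer (1 + a - f) N \<noteq> 0"
  shows "(\<Sum>n=0..N. vwp_weight a N n * wp_ratio a d e n
            * Q2_3 k (of_nat N - of_nat n) (- a - 2 * of_nat N) (d - a - of_nat N) (e - a - of_nat N) (f - a - of_nat N))
         = pochhammer (1 + a) N * pochhammer (1 - of_nat k + a - d - e) N * pochhammer (1 - of_nat k + a - f) N
            / (pochhammer (1 + a - d) N * pochhammer (1 + a - e) N * pochhammer (1 + a - f) N)"
proof -
  define s where "s = of_nat k - 1 - (- a - 2 * of_nat N) + (d - a - of_nat N) + (e - a - of_nat N) + (f - a - of_nat N)"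
  have inverse_f: "pochhammer s j / pochhammer (f - a - of_nat N) j
      = pochhammer s j * ((- 1) ^ j * pochhammer (1 + a - f) (N - j)) / pochhammer (1 + a - f) N"
    if "j \<le> N" for j
  proof -
    have split_f: "pochhammer (1 + a - f) N = (- 1) ^ j * pochhammer (1 + a - f) (N - j) * pochhammer (f - a - of_nat N) j"
      using pochhammer_split_reflected[OF that, of "1 + a - f"] by (simp add: algebra_simps)
    then have "pochhammer (f - a - of_nat N) j \<noteq> 0" "pochhammer (1 + a - f) (N - j) \<noteq> 0"
      using hf by auto
    then show ?thesis
      unfolding split_f by (simp add: field_simps)
  qed
  have "(\<Sum>j=0..N. of_nat (N choose j) * pochhammer (- of_nat k) j * (pochhammer s j / pochhammer (f - a - of_nat N) j)
          * pochhammer (1 + a - d - e) (N - j))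
      = (\<Sum>j=0..N. of_nat (N choose j) * pochhammer (- of_nat k) j * pochhammer s j
          * ((- 1) ^ j * pochhammer (1 + a - f) (N - j)) * pochhammer (1 + a - d - e) (N - j)) / pochhammer (1 + a - f) N"
    unfolding sum_divide_distrib by (intro sum.cong refl) (simp add: inverse_f)
  also have "(\<Sum>j=0..N. of_nat (N choose j) * pochhammer (- of_nat k) j * pochhammer s j
          * ((- 1) ^ j * pochhammer (1 + a - f) (N - j)) * pochhammer (1 + a - d - e) (N - j))
      = pochhammer (1 - of_nat k + a - f) N * pochhammer (1 - of_nat k + a - d - e) N"
  proof -
    have parameters: "1 - (1 + a - f) - of_nat N - - of_nat k - s = 1 + a - d - e"
      "1 + a - f + - of_nat k = 1 - of_nat k + a - f"
      "1 - (1 + a - f) - s - of_nat N = 1 - of_nat k + a - d - e"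
      by (simp_all add: s_def algebra_simps)
    show ?thesis
      using pfaff_saalschuetz_reflected[of N "- of_nat k" s "1 + a - f"] unfolding parameters .
  qed
  finally show ?thesis
    unfolding Q2_3_reflected vwp_wp_ratio_terminating_series[OF assms(1-4)] s_def[symmetric]
    by (simp add: mult_ac)
qed

lemma vwp_wp_ratio_Q2_2_sum_shifted:
  fixes a d e :: complex
  assumes hA: "pochhammer (a / 2) N \<noteq> 0" and hB: "pochhammer (1 + a + of_nat N) N \<noteq> 0"
    and hd: "pochhammer (1 + a - d) N \<noteq> 0" and he: "pochhammer (1 + a - e) N \<noteq> 0" and "i \<le> N"
  shows "(\<Sum>m=0..N-i. vwp_weight (a + 2 * of_nat i) (N - i) m * wp_ratio (a + 2 * of_nat i) (d + of_nat i) (e + of_nat i) m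
            * Q2_2 k (of_nat (N - i) - of_nat m) (- a - 2 * of_nat N) (d - a - of_nat N) (e - a - of_nat N))
    = pochhammer (1 + (a + 2 * of_nat i)) (N - i) * pochhammer (1 - of_nat k + a - d - e) (N - i)
        / (pochhammer (1 + a - d + of_nat i) (N - i) * pochhammer (1 + a - e + of_nat i) (N - i))"
proof -
  have shift_d: "1 + (a + 2 * of_nat i) - (d + of_nat i) = 1 + a - d + of_nat i"
    and shift_e: "1 + (a + 2 * of_nat i) - (e + of_nat i) = 1 + a - e + of_nat i"
    and shift_k: "1 - of_nat k + (a + 2 * of_nat i) - (d + of_nat i) - (e + of_nat i) = 1 - of_nat k + a - d - e"
    by simp_all
  have invariant: "- (a + 2 * of_nat i) - 2 * of_nat (N - i) = - a - 2 * of_nat N"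
    "d + of_nat i - (a + 2 * of_nat i) - of_nat (N - i) = d - a - of_nat N"
    "e + of_nat i - (a + 2 * of_nat i) - of_nat (N - i) = e - a - of_nat N"
    using \<open>i \<le> N\<close> by (simp_all add: of_nat_diff)
  have "pochhammer (1 + (a + 2 * of_nat i) - (d + of_nat i)) (N - i) \<noteq> 0"
    and "pochhammer (1 + (a + 2 * of_nat i) - (e + of_nat i)) (N - i) \<noteq> 0"
    unfolding shift_d shift_e using \<open>i \<le> N\<close> hd he by (simp_all add: pochhammer_shift_neq_0)
  from vwp_wp_ratio_Q2_2_sum[OF vwp_nonvanishing_shift[OF hA hB \<open>i \<le> N\<close>] this, of k]
  show ?thesis
    unfolding invariant shift_d shift_e shift_k .
qed

lemma vwp_wp_ratio_Q2_3_sum_shifted: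
  fixes a d e f :: complex
  assumes hA: "pochhammer (a / 2) N \<noteq> 0" and hB: "pochhammer (1 + a + of_nat N) N \<noteq> 0"
    and hd: "pochhammer (1 + a - d) N \<noteq> 0" and he: "pochhammer (1 + a - e) N \<noteq> 0"
    and hf: "pochhammer (1 + a - f) N \<noteq> 0" and "i \<le> N"
  shows "(\<Sum>m=0..N-i. vwp_weight (a + 2 * of_nat i) (N - i) m * wp_ratio (a + 2 * of_nat i) (d + of_nat i) (e + of_nat i) m
            * Q2_3 k (of_nat (N - i) - of_nat m) (- a - 2 * of_nat N) (d - a - of_nat N) (e - a - of_nat N) (f - a - of_nat N))
    = pochhammer (1 + (a + 2 * of_nat i)) (N - i) * pochhammer (1 - of_nat k + a - d - e) (N - i)
        * pochhammer (1 - of_nat k + a - f + of_nat i) (N - i)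
        / (pochhammer (1 + a - d + of_nat i) (N - i) * pochhammer (1 + a - e + of_nat i) (N - i)
           * pochhammer (1 + a - f + of_nat i) (N - i))"
proof -
  have shift_d: "1 + (a + 2 * of_nat i) - (d + of_nat i) = 1 + a - d + of_nat i"
    and shift_e: "1 + (a + 2 * of_nat i) - (e + of_nat i) = 1 + a - e + of_nat i"
    and shift_f: "1 + (a + 2 * of_nat i) - (f + of_nat i) = 1 + a - f + of_nat i"
    and shift_k: "1 - of_nat k + (a + 2 * of_nat i) - (d + of_nat i) - (e + of_nat i) = 1 - of_nat k + a - d - e"
    and shift_kf: "1 - of_nat k + (a + 2 * of_nat i) - (f + of_nat i) = 1 - of_nat k + a - f + of_nat i"
    by simp_all
  have invariant: "- (a + 2 * of_nat i) - 2 * of_nat (N - i) = - a - 2 * of_nat N"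
    "d + of_nat i - (a + 2 * of_nat i) - of_nat (N - i) = d - a - of_nat N"
    "e + of_nat i - (a + 2 * of_nat i) - of_nat (N - i) = e - a - of_nat N"
    "f + of_nat i - (a + 2 * of_nat i) - of_nat (N - i) = f - a - of_nat N"
    using \<open>i \<le> N\<close> by (simp_all add: of_nat_diff)
  have "pochhammer (1 + (a + 2 * of_nat i) - (d + of_nat i)) (N - i) \<noteq> 0"
    and "pochhammer (1 + (a + 2 * of_nat i) - (e + of_nat i)) (N - i) \<noteq> 0"
    and "pochhammer (1 + (a + 2 * of_nat i) - (f + of_nat i)) (N - i) \<noteq> 0"
    unfolding shift_d shift_e shift_f using \<open>i \<le> N\<close> hd he hf by (simp_all add: pochhammer_shift_neq_0)
  from vwp_wp_ratio_Q2_3_sum[OF vwp_nonvanishing_shift[OF hA hB \<open>i \<le> N\<close>] this, of k]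
  show ?thesis
    unfolding invariant shift_d shift_e shift_f shift_k shift_kf .
qed

section \<open>The sum L_Q\<close>

lemma LQ_eq_vwp_sum:
  "LQ a b c d e N Q
     = (\<Sum>n=0..N. vwp_weight a N n * wp_ratio a b c n * wp_ratio a d e n * Q (of_nat N - of_nat n)) / Q (of_nat N)"
  unfolding LQ_def vwp_weight_def wp_ratio_def sum_divide_distrib
  by (intro sum.cong refl) (simp add: mult_ac)

lemma vwp_wp_ratio_sum_shift:
  fixes a d e :: "'a::field_char_0" and Q :: "'a \<Rightarrow> 'a"
  assumes hA: "pochhammer (a / 2) N \<noteq> 0" and hB: "pochhammer (1 + a + of_nat N) N \<noteq> 0"
    and hd: "pochhammer (1 + a - d) N \<noteq> 0" and he: "pochhammer (1 + a - e) N \<noteq> 0" and "i \<le> N"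
  shows "(\<Sum>n=0..N. vwp_weight a N n * pochhammer (- of_nat n) i * pochhammer (a + of_nat n) i
            * (wp_ratio a d e n * Q (of_nat N - of_nat n)))
    = vwp_shift_factor a N i * wp_ratio a d e i
        * (\<Sum>m=0..N-i. vwp_weight (a + 2 * of_nat i) (N - i) m
            * wp_ratio (a + 2 * of_nat i) (d + of_nat i) (e + of_nat i) m * Q (of_nat (N - i) - of_nat m))"
proof -
  have shifted: "wp_ratio a d e (i + m) * Q (of_nat N - of_nat (i + m))
      = wp_ratio a d e i * (wp_ratio (a + 2 * of_nat i) (d + of_nat i) (e + of_nat i) m * Q (of_nat (N - i) - of_nat m))"
    if "m \<in> {0..N-i}" for m
  proof -
    have "i + m \<le> N"
      using that \<open>i \<le> N\<close> by simp
    have argument: "(of_nat N - of_nat (i + m) :: 'a) = of_nat (N - i) - of_nat m"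
      using \<open>i \<le> N\<close> by (simp add: of_nat_diff)
    show ?thesis
      unfolding wp_ratio_split[OF pochhammer_neq_0_mono[OF hd \<open>i + m \<le> N\<close>]
          pochhammer_neq_0_mono[OF he \<open>i + m \<le> N\<close>]] argument
      by (simp only: mult.assoc)
  qed
  have "(\<Sum>n=0..N. vwp_weight a N n * pochhammer (- of_nat n) i * pochhammer (a + of_nat n) i
            * (wp_ratio a d e n * Q (of_nat N - of_nat n)))
      = vwp_shift_factor a N i * (\<Sum>m=0..N-i. vwp_weight (a + 2 * of_nat i) (N - i) m
            * (wp_ratio a d e (i + m) * Q (of_nat N - of_nat (i + m))))"
    by (rule vwp_sum_shift[OF hA hB \<open>i \<le> N\<close>])
  also have "(\<Sum>m=0..N-i. vwp_weight (a + 2 * of_nat i) (N - i) m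
            * (wp_ratio a d e (i + m) * Q (of_nat N - of_nat (i + m))))
      = (\<Sum>m=0..N-i. vwp_weight (a + 2 * of_nat i) (N - i) m
      * (wp_ratio a d e i * (wp_ratio (a + 2 * of_nat i) (d + of_nat i) (e + of_nat i) m
         * Q (of_nat (N - i) - of_nat m))))"
    by (intro sum.cong refl) (simp only: shifted)
  finally show ?thesis
    by (simp only: sum_distrib_left mult_ac)
qed

lemma vwp_double_wp_ratio_reduction:
  fixes a b c d e :: "'a::field_char_0" and Q :: "'a \<Rightarrow> 'a"
  assumes hA: "pochhammer (a / 2) N \<noteq> 0" and hB: "pochhammer (1 + a + of_nat N) N \<noteq> 0"
    and hb: "pochhammer (1 + a - b) N \<noteq> 0" and hc: "pochhammer (1 + a - c) N \<noteq> 0"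
    and hd: "pochhammer (1 + a - d) N \<noteq> 0" and he: "pochhammer (1 + a - e) N \<noteq> 0"
  shows "(\<Sum>n=0..N. vwp_weight a N n * wp_ratio a b c n * wp_ratio a d e n * Q (of_nat N - of_nat n))
    = (\<Sum>i=0..N. wp_coeff a b c i * vwp_shift_factor a N i * wp_ratio a d e i
        * (\<Sum>m=0..N-i. vwp_weight (a + 2 * of_nat i) (N - i) m
            * wp_ratio (a + 2 * of_nat i) (d + of_nat i) (e + of_nat i) m * Q (of_nat (N - i) - of_nat m)))"
proof -
  let ?g = "\<lambda>i n. vwp_weight a N n * pochhammer (- of_nat n) i * pochhammer (a + of_nat n) i
      * (wp_ratio a d e n * Q (of_nat N - of_nat n))"
  have "(\<Sum>n=0..N. vwp_weight a N n * wp_ratio a b c n * wp_ratio a d e n * Q (of_nat N - of_nat n))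
      = (\<Sum>n=0..N. \<Sum>i=0..N. wp_coeff a b c i * ?g i n)"
  proof (rule sum.cong[OF refl])
    fix n
    assume "n \<in> {0..N}"
    then have "n \<le> N"
      by simp
    show "vwp_weight a N n * wp_ratio a b c n * wp_ratio a d e n * Q (of_nat N - of_nat n)
        = (\<Sum>i=0..N. wp_coeff a b c i * ?g i n)"
      unfolding wp_ratio_expansion_upto[OF hb hc \<open>n \<le> N\<close>] sum_distrib_left sum_distrib_right
      by (intro sum.cong refl) (simp add: mult_ac)
  qed
  also have "\<dots> = (\<Sum>i=0..N. wp_coeff a b c i * (\<Sum>n=0..N. ?g i n))"
    unfolding sum_distrib_left by (rule sum.swap)
  also have "\<dots> = (\<Sum>i=0..N. wp_coeff a b c i * vwp_shift_factor a N i * wp_ratio a d e i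
        * (\<Sum>m=0..N-i. vwp_weight (a + 2 * of_nat i) (N - i) m
            * wp_ratio (a + 2 * of_nat i) (d + of_nat i) (e + of_nat i) m * Q (of_nat (N - i) - of_nat m)))"
  proof (rule sum.cong[OF refl])
    fix i
    assume "i \<in> {0..N}"
    then have "i \<le> N"
      by simp
    then show "wp_coeff a b c i * (\<Sum>n=0..N. ?g i n) = wp_coeff a b c i * vwp_shift_factor a N i * wp_ratio a d e i
        * (\<Sum>m=0..N-i. vwp_weight (a + 2 * of_nat i) (N - i) m
            * wp_ratio (a + 2 * of_nat i) (d + of_nat i) (e + of_nat i) m * Q (of_nat (N - i) - of_nat m))"
      using vwp_wp_ratio_sum_shift[OF hA hB hd he, of i Q] by (simp only: mult.assoc)
  qed
  finally show ?thesis .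
qed

lemma vwp_reduced_term:
  fixes a b c d e :: "'a::field_char_0"
  assumes hA: "pochhammer (a / 2) N \<noteq> 0" and hB: "pochhammer (1 + a + of_nat N) N \<noteq> 0"
    and hb: "pochhammer (1 + a - b) N \<noteq> 0" and hc: "pochhammer (1 + a - c) N \<noteq> 0"
    and hd: "pochhammer (1 + a - d) N \<noteq> 0" and he: "pochhammer (1 + a - e) N \<noteq> 0"
    and hk: "pochhammer (of_nat k - a + d + e - of_nat N) N \<noteq> 0" and "i \<le> N"
  shows "wp_coeff a b c i * vwp_shift_factor a N i * wp_ratio a d e i
      * (pochhammer (1 + (a + 2 * of_nat i)) (N - i) * pochhammer (1 - of_nat k + a - d - e) (N - i)
         / (pochhammer (1 + a - d + of_nat i) (N - i) * pochhammer (1 + a - e + of_nat i) (N - i)))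
    = pochhammer (1 + a) N * pochhammer (1 - of_nat k + a - d - e) N
        / (pochhammer (1 + a - d) N * pochhammer (1 + a - e) N)
      * (pochhammer (1 + a - b - c) i * pochhammer d i * pochhammer e i * pochhammer (- of_nat N) i
         / (fact i * pochhammer (1 + a - b) i * pochhammer (1 + a - c) i
            * pochhammer (of_nat k - a + d + e - of_nat N) i))"
proof -
  have split_d: "pochhammer (1 + a - d) N = pochhammer (1 + a - d) i * pochhammer (1 + a - d + of_nat i) (N - i)"
    and split_e: "pochhammer (1 + a - e) N = pochhammer (1 + a - e) i * pochhammer (1 + a - e + of_nat i) (N - i)"
    using pochhammer_product[OF \<open>i \<le> N\<close>] by blast+
  have split_k: "pochhammer (1 - of_nat k + a - d - e) N = (- 1) ^ i * pochhammer (1 - of_nat k + a - d - e) (N - i)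
      * pochhammer (of_nat k - a + d + e - of_nat N) i"
    using pochhammer_split_reflected[OF \<open>i \<le> N\<close>, of "1 - of_nat k + a - d - e"] by (simp add: algebra_simps)
  have "pochhammer (1 + a - d) i \<noteq> 0" "pochhammer (1 + a - d + of_nat i) (N - i) \<noteq> 0"
    "pochhammer (1 + a - e) i \<noteq> 0" "pochhammer (1 + a - e + of_nat i) (N - i) \<noteq> 0"
    using hd he unfolding split_d split_e by auto
  moreover have "pochhammer (1 + a - b) i \<noteq> 0" "pochhammer (1 + a - c) i \<noteq> 0"
    "pochhammer (of_nat k - a + d + e - of_nat N) i \<noteq> 0"
    using pochhammer_neq_0_mono[OF hb \<open>i \<le> N\<close>] pochhammer_neq_0_mono[OF hc \<open>i \<le> N\<close>]
      pochhammer_neq_0_mono[OF hk \<open>i \<le> N\<close>] .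
  ultimately have "wp_coeff a b c i * wp_ratio a d e i * ((- 1) ^ i * pochhammer (- of_nat N) i * pochhammer (1 + a) N)
      * (pochhammer (1 - of_nat k + a - d - e) (N - i)
         / (pochhammer (1 + a - d + of_nat i) (N - i) * pochhammer (1 + a - e + of_nat i) (N - i)))
    = pochhammer (1 + a) N * pochhammer (1 - of_nat k + a - d - e) N
        / (pochhammer (1 + a - d) N * pochhammer (1 + a - e) N)
      * (pochhammer (1 + a - b - c) i * pochhammer d i * pochhammer e i * pochhammer (- of_nat N) i
         / (fact i * pochhammer (1 + a - b) i * pochhammer (1 + a - c) i
            * pochhammer (of_nat k - a + d + e - of_nat N) i))"
    unfolding split_d split_e split_k wp_coeff_def wp_ratio_def by (simp add: field_simps)
  then show ?thesis
    unfolding vwp_shift_factor_mult[OF hA hB \<open>i \<le> N\<close>, symmetric] by (simp only: mult_ac times_divide_eq_right)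
qed

lemma vwp_reduced_term_extra:
  fixes a b c d e f :: "'a::field_char_0"
  assumes hA: "pochhammer (a / 2) N \<noteq> 0" and hB: "pochhammer (1 + a + of_nat N) N \<noteq> 0"
    and hb: "pochhammer (1 + a - b) N \<noteq> 0" and hc: "pochhammer (1 + a - c) N \<noteq> 0"
    and hd: "pochhammer (1 + a - d) N \<noteq> 0" and he: "pochhammer (1 + a - e) N \<noteq> 0"
    and hk: "pochhammer (of_nat k - a + d + e - of_nat N) N \<noteq> 0"
    and hf: "pochhammer (1 + a - f) N \<noteq> 0" and hkf: "pochhammer (1 - of_nat k + a - f) N \<noteq> 0" and "i \<le> N"
  shows "wp_coeff a b c i * vwp_shift_factor a N i * wp_ratio a d e i
      * (pochhammer (1 + (a + 2 * of_nat i)) (N - i) * pochhammer (1 - of_nat k + a - d - e) (N - i)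
         * pochhammer (1 - of_nat k + a - f + of_nat i) (N - i)
         / (pochhammer (1 + a - d + of_nat i) (N - i) * pochhammer (1 + a - e + of_nat i) (N - i)
            * pochhammer (1 + a - f + of_nat i) (N - i)))
    = pochhammer (1 + a) N * pochhammer (1 - of_nat k + a - d - e) N * pochhammer (1 - of_nat k + a - f) N
        / (pochhammer (1 + a - d) N * pochhammer (1 + a - e) N * pochhammer (1 + a - f) N)
      * (pochhammer (1 + a - b - c) i * pochhammer d i * pochhammer e i * pochhammer (1 + a - f) i
         * pochhammer (- of_nat N) i
         / (fact i * pochhammer (1 + a - b) i * pochhammer (1 + a - c) i
            * pochhammer (of_nat k - a + d + e - of_nat N) i * pochhammer (1 - of_nat k + a - f) i))"
proof -
  have "wp_coeff a b c i * vwp_shift_factor a N i * wp_ratio a d e i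
      * (pochhammer (1 + (a + 2 * of_nat i)) (N - i) * pochhammer (1 - of_nat k + a - d - e) (N - i)
         * pochhammer (1 - of_nat k + a - f + of_nat i) (N - i)
         / (pochhammer (1 + a - d + of_nat i) (N - i) * pochhammer (1 + a - e + of_nat i) (N - i)
            * pochhammer (1 + a - f + of_nat i) (N - i)))
    = wp_coeff a b c i * vwp_shift_factor a N i * wp_ratio a d e i
      * (pochhammer (1 + (a + 2 * of_nat i)) (N - i) * pochhammer (1 - of_nat k + a - d - e) (N - i)
         / (pochhammer (1 + a - d + of_nat i) (N - i) * pochhammer (1 + a - e + of_nat i) (N - i)))
      * (pochhammer (1 - of_nat k + a - f + of_nat i) (N - i) / pochhammer (1 + a - f + of_nat i) (N - i))"
    by (simp add: mult_ac)
  also have "\<dots> = pochhammer (1 + a) N * pochhammer (1 - of_nat k + a - d - e) N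
        / (pochhammer (1 + a - d) N * pochhammer (1 + a - e) N)
      * (pochhammer (1 + a - b - c) i * pochhammer d i * pochhammer e i * pochhammer (- of_nat N) i
         / (fact i * pochhammer (1 + a - b) i * pochhammer (1 + a - c) i
            * pochhammer (of_nat k - a + d + e - of_nat N) i))
      * (pochhammer (1 - of_nat k + a - f) N / pochhammer (1 + a - f) N
         * (pochhammer (1 + a - f) i / pochhammer (1 - of_nat k + a - f) i))"
    unfolding vwp_reduced_term[OF hA hB hb hc hd he hk \<open>i \<le> N\<close>]
      pochhammer_tail_ratio[OF hkf hf \<open>i \<le> N\<close>] ..
  finally show ?thesis
    by (simp add: mult_ac)
qed

lemma LQ_Q2_2_eq_4F3:
  fixes a b c d e :: complex
  assumes hA: "pochhammer (a / 2) N \<noteq> 0" and hb: "pochhammer (1 + a - b) N \<noteq> 0"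
    and hc: "pochhammer (1 + a - c) N \<noteq> 0" and hd: "pochhammer (1 + a - d) N \<noteq> 0"
    and he: "pochhammer (1 + a - e) N \<noteq> 0" and hB: "pochhammer (1 + a + of_nat N) N \<noteq> 0"
    and hk: "pochhammer (of_nat k - a + d + e - of_nat N) N \<noteq> 0"
  shows "LQ a b c d e N (\<lambda>n. Q2_2 k n (- a - 2 * of_nat N) (d - a - of_nat N) (e - a - of_nat N))
     = 1 / Q2_2 k (of_nat N) (- a - 2 * of_nat N) (d - a - of_nat N) (e - a - of_nat N)
       * (pochhammer (1 + a) N * pochhammer (1 - of_nat k + a - d - e) N
          / (pochhammer (1 + a - d) N * pochhammer (1 + a - e) N))
       * hypF [1 + a - b - c, d, e, - of_nat N] [1 + a - b, 1 + a - c, of_nat k - a + d + e - of_nat N] N"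
proof -
  let ?Q = "\<lambda>n. Q2_2 k n (- a - 2 * of_nat N) (d - a - of_nat N) (e - a - of_nat N)"
  let ?C = "pochhammer (1 + a) N * pochhammer (1 - of_nat k + a - d - e) N
      / (pochhammer (1 + a - d) N * pochhammer (1 + a - e) N)"
  let ?t = "\<lambda>i. pochhammer (1 + a - b - c) i * pochhammer d i * pochhammer e i * pochhammer (- of_nat N) i
      / (fact i * pochhammer (1 + a - b) i * pochhammer (1 + a - c) i * pochhammer (of_nat k - a + d + e - of_nat N) i)"
  have "(\<Sum>n=0..N. vwp_weight a N n * wp_ratio a b c n * wp_ratio a d e n * ?Q (of_nat N - of_nat n))
      = (\<Sum>i=0..N. ?C * ?t i)"
    unfolding vwp_double_wp_ratio_reduction[OF hA hB hb hc hd he, where Q = ?Q]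
    by (intro sum.cong refl) (simp only: atLeastAtMost_iff vwp_wp_ratio_Q2_2_sum_shifted[OF hA hB hd he]
        vwp_reduced_term[OF hA hB hb hc hd he hk])
  also have "\<dots> = ?C * hypF [1 + a - b - c, d, e, - of_nat N] [1 + a - b, 1 + a - c, of_nat k - a + d + e - of_nat N] N"
    unfolding hypF_def sum_distrib_left by (simp add: mult.assoc)
  finally show ?thesis
    unfolding LQ_eq_vwp_sum by simp
qed

lemma LQ_Q2_3_eq_5F4:
  fixes a b c d e f :: complex
  assumes hA: "pochhammer (a / 2) N \<noteq> 0" and hb: "pochhammer (1 + a - b) N \<noteq> 0"
    and hc: "pochhammer (1 + a - c) N \<noteq> 0" and hd: "pochhammer (1 + a - d) N \<noteq> 0"
    and he: "pochhammer (1 + a - e) N \<noteq> 0" and hB: "pochhammer (1 + a + of_nat N) N \<noteq> 0"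
    and hk: "pochhammer (of_nat k - a + d + e - of_nat N) N \<noteq> 0"
    and hf: "pochhammer (1 + a - f) N \<noteq> 0" and hkf: "pochhammer (1 - of_nat k + a - f) N \<noteq> 0"
  shows "LQ a b c d e N (\<lambda>n. Q2_3 k n (- a - 2 * of_nat N) (d - a - of_nat N) (e - a - of_nat N) (f - a - of_nat N))
     = 1 / Q2_3 k (of_nat N) (- a - 2 * of_nat N) (d - a - of_nat N) (e - a - of_nat N) (f - a - of_nat N)
       * (pochhammer (1 + a) N * pochhammer (1 - of_nat k + a - d - e) N * pochhammer (1 - of_nat k + a - f) N
          / (pochhammer (1 + a - d) N * pochhammer (1 + a - e) N * pochhammer (1 + a - f) N))
       * hypF [1 + a - b - c, d, e, 1 + a - f, - of_nat N]
              [1 + a - b, 1 + a - c, of_nat k - a + d + e - of_nat N, 1 - of_nat k + a - f] N"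
proof -
  let ?Q = "\<lambda>n. Q2_3 k n (- a - 2 * of_nat N) (d - a - of_nat N) (e - a - of_nat N) (f - a - of_nat N)"
  let ?C = "pochhammer (1 + a) N * pochhammer (1 - of_nat k + a - d - e) N * pochhammer (1 - of_nat k + a - f) N
      / (pochhammer (1 + a - d) N * pochhammer (1 + a - e) N * pochhammer (1 + a - f) N)"
  let ?t = "\<lambda>i. pochhammer (1 + a - b - c) i * pochhammer d i * pochhammer e i * pochhammer (1 + a - f) i
      * pochhammer (- of_nat N) i / (fact i * pochhammer (1 + a - b) i * pochhammer (1 + a - c) i
        * pochhammer (of_nat k - a + d + e - of_nat N) i * pochhammer (1 - of_nat k + a - f) i)"
  have "(\<Sum>n=0..N. vwp_weight a N n * wp_ratio a b c n * wp_ratio a d e n * ?Q (of_nat N - of_nat n))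
      = (\<Sum>i=0..N. ?C * ?t i)"
    unfolding vwp_double_wp_ratio_reduction[OF hA hB hb hc hd he, where Q = ?Q]
    by (intro sum.cong refl) (simp only: atLeastAtMost_iff vwp_wp_ratio_Q2_3_sum_shifted[OF hA hB hd he hf]
        vwp_reduced_term_extra[OF hA hB hb hc hd he hk hf hkf])
  also have "\<dots> = ?C * hypF [1 + a - b - c, d, e, 1 + a - f, - of_nat N]
      [1 + a - b, 1 + a - c, of_nat k - a + d + e - of_nat N, 1 - of_nat k + a - f] N"
    unfolding hypF_def sum_distrib_left by (simp add: mult.assoc)
  finally show ?thesis
    unfolding LQ_eq_vwp_sum by simp
qed

theorem theorem10:
  fixes a b c d e f :: complex and k N :: nat
  assumes gen: "pochhammer (a/2) N \<noteq> 0" "pochhammer (1 + a - b) N \<noteq> 0"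
    "pochhammer (1 + a - c) N \<noteq> 0" "pochhammer (1 + a - d) N \<noteq> 0"
    "pochhammer (1 + a - e) N \<noteq> 0" "pochhammer (1 + a + of_nat N) N \<noteq> 0"
  shows
   "(pochhammer (d - a - of_nat N) k \<noteq> 0 \<and> pochhammer (e - a - of_nat N) k \<noteq> 0
     \<and> pochhammer (of_nat k - a + d + e - of_nat N) N \<noteq> 0
     \<and> Q2_2 k (of_nat N) (-a - 2 * of_nat N) (d - a - of_nat N) (e - a - of_nat N) \<noteq> 0
     \<longrightarrow>
     LQ a b c d e N (\<lambda>n. Q2_2 k n (-a - 2 * of_nat N) (d - a - of_nat N) (e - a - of_nat N))
     = 1 / Q2_2 k (of_nat N) (-a - 2 * of_nat N) (d - a - of_nat N) (e - a - of_nat N)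
       * (pochhammer (1 + a) N * pochhammer (1 - of_nat k + a - d - e) N
          / (pochhammer (1 + a - d) N * pochhammer (1 + a - e) N))
       * hypF [1 + a - b - c, d, e, - of_nat N]
              [1 + a - b, 1 + a - c, of_nat k - a + d + e - of_nat N] N)
  \<and>
   (pochhammer (d - a - of_nat N) k \<noteq> 0 \<and> pochhammer (e - a - of_nat N) k \<noteq> 0
     \<and> pochhammer (f - a - of_nat N) k \<noteq> 0
     \<and> pochhammer (1 + a - f) N \<noteq> 0
     \<and> pochhammer (of_nat k - a + d + e - of_nat N) N \<noteq> 0
     \<and> pochhammer (1 - of_nat k + a - f) N \<noteq> 0
     \<and> Q2_3 k (of_nat N) (-a - 2 * of_nat N) (d - a - of_nat N) (e - a - of_nat N) (f - a - of_nat N) \<noteq> 0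
     \<longrightarrow>
     LQ a b c d e N (\<lambda>n. Q2_3 k n (-a - 2 * of_nat N) (d - a - of_nat N) (e - a - of_nat N) (f - a - of_nat N))
     = 1 / Q2_3 k (of_nat N) (-a - 2 * of_nat N) (d - a - of_nat N) (e - a - of_nat N) (f - a - of_nat N)
       * (pochhammer (1 + a) N * pochhammer (1 - of_nat k + a - d - e) N * pochhammer (1 - of_nat k + a - f) N
          / (pochhammer (1 + a - d) N * pochhammer (1 + a - e) N * pochhammer (1 + a - f) N))
       * hypF [1 + a - b - c, d, e, 1 + a - f, - of_nat N]
              [1 + a - b, 1 + a - c, of_nat k - a + d + e - of_nat N, 1 - of_nat k + a - f] N)"
  using LQ_Q2_2_eq_4F3[OF gen] LQ_Q2_3_eq_5F4[OF gen] by blast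

end
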